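(* Let $\Delta$ be the $d$-simplex, i.e., the simplicial complex with vertex set $[d+1]$ containing all subsets of $[d+1]$ as faces. Then there is a sequence of elementary $2$-collapses that starts with $\Delta$ and ends with the simplicial complex whose faces are the empty set and the singletons $\{i\}$, $i \in [d+1]$ (all vertices of $\Delta$ and no faces of higher dimension).
   Context: Elementary $2$-collapse: if ${\sf K}$ is a simplicial complex and $\sigma, \tau \in {\sf K}$ satisfy (i) $\dim \sigma \leq 1$, (ii) $\tau$ is an inclusion-maximal face of ${\sf K}$, (iii) $\sigma \subseteq \tau$, and (iv) $\tau$ is the only face of ${\sf K}$ satisfying (ii) and (iii), then ${\sf K}' := {\sf K} \setminus \{\eta \in {\sf K} : \sigma \subseteq \eta \subseteq \tau\}$ arises from ${\sf K}$ by an elementary $2$-collapse. *)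

theory Defs
  imports Main
begin

text \<open>A (finite abstract) simplicial complex is represented as a set of faces,
each face a finite set of vertices. dim sigma = card sigma - 1, so
"dim sigma \<le> 1" is "card sigma \<le> 2" for finite sigma.\<close>

definition inclusion_maximal :: "'a set set \<Rightarrow> 'a set \<Rightarrow> bool" where
  "inclusion_maximal K \<tau> \<longleftrightarrow> \<tau> \<in> K \<and> (\<forall>\<eta>\<in>K. \<tau> \<subseteq> \<eta> \<longrightarrow> \<eta> = \<tau>)"

definition elementary_2_collapse :: "'a set set \<Rightarrow> 'a set set \<Rightarrow> bool" where
  "elementary_2_collapse K K' \<longleftrightarrow>
     (\<exists>\<sigma> \<tau>. \<sigma> \<in> K \<and> \<tau> \<in> K \<and> finite \<sigma> \<and> card \<sigma> \<le> 2
        \<and> inclusion_maximal K \<tau> \<and> \<sigma> \<subseteq> \<tau>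
        \<and> (\<forall>\<tau>'. inclusion_maximal K \<tau>' \<and> \<sigma> \<subseteq> \<tau>' \<longrightarrow> \<tau>' = \<tau>)
        \<and> K' = K - {\<eta> \<in> K. \<sigma> \<subseteq> \<eta> \<and> \<eta> \<subseteq> \<tau>})"

definition simplex :: "nat \<Rightarrow> nat set set" where
  "simplex d = Pow {1..d+1}"

definition vertex_complex :: "nat \<Rightarrow> nat set set" where
  "vertex_complex d = insert {} ((\<lambda>i. {i}) ` {1..d+1})"

end

theory Submission
  imports Defs
begin

text \<open>The vertices of the simplex are removed one at a time. If \<open>a\<close> is the vertex being
removed and \<open>U\<close> the set of remaining vertices, the faces containing \<open>a\<close> form the cone
\<open>insert a ` Pow W\<close> with \<open>W = U\<close>. For \<open>c \<in> W\<close> the edge \<open>{a, c}\<close> lies only in faces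
contained in the maximal face \<open>insert a W\<close>, so collapsing it removes exactly the faces
containing \<open>a\<close> and \<open>c\<close>, which replaces \<open>W\<close> by \<open>W - {c}\<close>. Once \<open>W\<close> is empty, \<open>a\<close> is an
isolated vertex and the simplex on \<open>U\<close> is treated in the same way.\<close>

lemma elementary_2_collapse_starI:
  assumes "\<sigma> \<in> K" "\<tau> \<in> K" "\<sigma> \<subseteq> \<tau>" "finite \<sigma>" "card \<sigma> \<le> 2"
    and star_in_face: "\<And>\<eta>. \<eta> \<in> K \<Longrightarrow> \<sigma> \<subseteq> \<eta> \<Longrightarrow> \<eta> \<subseteq> \<tau>"
  shows "elementary_2_collapse K (K - {\<eta> \<in> K. \<sigma> \<subseteq> \<eta>})"
proof -
  have maximal: "inclusion_maximal K \<tau>"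
    unfolding inclusion_maximal_def using assms by blast
  have unique: "\<tau>' = \<tau>" if "inclusion_maximal K \<tau>'" "\<sigma> \<subseteq> \<tau>'" for \<tau>'
    using that \<open>\<tau> \<in> K\<close> star_in_face unfolding inclusion_maximal_def by blast
  have star: "{\<eta> \<in> K. \<sigma> \<subseteq> \<eta>} = {\<eta> \<in> K. \<sigma> \<subseteq> \<eta> \<and> \<eta> \<subseteq> \<tau>}"
    using star_in_face by blast
  show ?thesis
    unfolding elementary_2_collapse_def star using assms maximal unique by blast
qed

definition coned_simplex :: "'a set \<Rightarrow> 'a set \<Rightarrow> 'a \<Rightarrow> 'a set \<Rightarrow> 'a set set" where
  "coned_simplex U S a W = Pow U \<union> (\<lambda>s. {s}) ` S \<union> insert a ` Pow W"

lemma coned_simplex_collapse_edge: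
  assumes "a \<notin> U" "W \<subseteq> U" "c \<in> W"
  shows "elementary_2_collapse (coned_simplex U S a W) (coned_simplex U S a (W - {c}))"
proof -
  let ?K = "coned_simplex U S a W"
  have "c \<noteq> a" using assms by blast
  have edge_star: "\<eta> \<in> insert a ` Pow W"
    if "\<eta> \<in> ?K" "{a, c} \<subseteq> \<eta>" for \<eta>
    using that \<open>a \<notin> U\<close> \<open>c \<noteq> a\<close> unfolding coned_simplex_def by blast
  have "elementary_2_collapse ?K (?K - {\<eta> \<in> ?K. {a, c} \<subseteq> \<eta>})"
  proof (rule elementary_2_collapse_starI)
    show "{a, c} \<in> ?K" "insert a W \<in> ?K"
      using \<open>c \<in> W\<close> unfolding coned_simplex_def by blast+
    show "{a, c} \<subseteq> insert a W" using \<open>c \<in> W\<close> by blast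
    show "card {a, c} \<le> 2" by (simp add: card_insert_if)
    show "\<eta> \<subseteq> insert a W" if "\<eta> \<in> ?K" "{a, c} \<subseteq> \<eta>" for \<eta>
      using edge_star[OF that] by blast
  qed simp
  moreover have "?K - {\<eta> \<in> ?K. {a, c} \<subseteq> \<eta>} = coned_simplex U S a (W - {c})"
    using \<open>a \<notin> U\<close> \<open>c \<noteq> a\<close> unfolding coned_simplex_def by blast
  ultimately show ?thesis by simp
qed

lemma coned_simplex_collapses_to_apex:
  assumes "finite W" "a \<notin> U" "W \<subseteq> U"
  shows "elementary_2_collapse\<^sup>*\<^sup>* (coned_simplex U S a W) (coned_simplex U S a {})"
  using assms
proof (induction W rule: finite_induct)
  case empty
  show ?case by simp
next
  case (insert c W)
  then have "elementary_2_collapse (coned_simplex U S a (insert c W)) (coned_simplex U S a W)"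
    using coned_simplex_collapse_edge[of a U "insert c W" c S] by simp
  then show ?case
    using insert by (auto intro: converse_rtranclp_into_rtranclp)
qed

lemma simplex_collapses_to_vertices:
  assumes "finite U"
  shows "elementary_2_collapse\<^sup>*\<^sup>* (Pow U \<union> (\<lambda>s. {s}) ` S) (insert {} ((\<lambda>s. {s}) ` (U \<union> S)))"
  using assms
proof (induction U arbitrary: S rule: finite_induct)
  case empty
  then show ?case by simp
next
  case (insert a U)
  have "Pow (insert a U) \<union> (\<lambda>s. {s}) ` S = coned_simplex U S a U"
    unfolding coned_simplex_def by (auto simp: Pow_insert)
  moreover have "coned_simplex U S a {} = Pow U \<union> (\<lambda>s. {s}) ` insert a S"
    unfolding coned_simplex_def by auto
  moreover have "insert a U \<union> S = U \<union> insert a S" by blast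
  moreover have "elementary_2_collapse\<^sup>*\<^sup>* (coned_simplex U S a U) (coned_simplex U S a {})"
    using insert by (intro coned_simplex_collapses_to_apex) auto
  ultimately show ?case
    using insert.IH[of "insert a S"] by (metis rtranclp_trans)
qed

theorem lemma5:
  fixes d :: nat
  shows "elementary_2_collapse\<^sup>*\<^sup>* (simplex d) (vertex_complex d)"
  using simplex_collapses_to_vertices[of "{1..d+1}" "{}"]
  unfolding simplex_def vertex_complex_def by simp

end
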